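(* Let $A\in\mathbb{R}^{m\times n}$ be semi-monotone and let $A=P_1-R_1+S_1=P_2-R_2+S_2$ be two double proper weak regular splittings of $A$. Suppose $A=P_3-R_3+S_3$ is a double proper regular splitting with $N(S_3)\supseteq N(P_3)$, $R(S_3)\subseteq R(P_3)$, and, for $i=1,2$, $1\notin\sigma(S_3P_i^{\dagger})$ and $\widehat{A}_i^{\dagger}\geq 0$, where $\widehat{A}_i=(I-S_3P_i^{\dagger})A$. Let $\widehat{P}_i=P_3$ and $\widehat{R}_i=R_3-S_3P_i^{\dagger}R_i$ for $i=1,2$. If $\widehat{P}_1^{\dagger}\widehat{A}_1\geq\widehat{P}_2^{\dagger}\widehat{A}_2$ and $\widehat{P}_1^{\dagger}\widehat{R}_1\geq\widehat{P}_2^{\dagger}\widehat{R}_2$, then $\rho(W_{13})\leq\rho(W_{23})<1$, where for $i=1,2$ $$W_{i3}=\begin{pmatrix} P_3^{\dagger}R_3-P_3^{\dagger}S_3P_i^{\dagger}R_i & P_3^{\dagger}S_3P_i^{\dagger}S_i\\ I & 0\end{pmatrix}.$$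
   Context: For $M\in\mathbb{R}^{m\times n}$, $M^{\dagger}$ is its Moore–Penrose inverse, $R(M)$, $N(M)$ its range and null space; inequalities are entrywise; $\rho$ is the spectral radius, $\sigma$ the spectrum. $A$ is semi-monotone if $A^{\dagger}\geq0$. A double splitting $A=P-R+S$ is a double proper splitting if $R(P)=R(A)$ and $N(P)=N(A)$; it is double proper regular if moreover $P^{\dagger}\geq0$, $R\geq0$, $S\leq0$; double proper weak regular if moreover $P^{\dagger}\geq 0$, $P^{\dagger}R\geq 0$, $P^{\dagger}S\leq 0$. *)

theory Defs
  imports "Jordan_Normal_Form.Spectral_Radius"
begin

type_synonym rmat = "real mat"

definition is_mp_inverse :: "real mat \<Rightarrow> real mat \<Rightarrow> bool" where
  "is_mp_inverse M X \<longleftrightarrow>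
     X \<in> carrier_mat (dim_col M) (dim_row M) \<and>
     M * X * M = M \<and> X * M * X = X \<and>
     transpose_mat (M * X) = M * X \<and> transpose_mat (X * M) = X * M"

definition range_mat :: "real mat \<Rightarrow> real vec set" where
  "range_mat M = {M *\<^sub>v x | x. x \<in> carrier_vec (dim_col M)}"

definition null_mat :: "real mat \<Rightarrow> real vec set" where
  "null_mat M = {x \<in> carrier_vec (dim_col M). M *\<^sub>v x = 0\<^sub>v (dim_row M)}"

definition mat_le :: "real mat \<Rightarrow> real mat \<Rightarrow> bool" where
  "mat_le M N \<longleftrightarrow> dim_row M = dim_row N \<and> dim_col M = dim_col N \<and>
     (\<forall>i < dim_row M. \<forall>j < dim_col M. M $$ (i,j) \<le> N $$ (i,j))"

definition nonneg_mat :: "real mat \<Rightarrow> bool" where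
  "nonneg_mat M \<longleftrightarrow> (\<forall>i < dim_row M. \<forall>j < dim_col M. M $$ (i,j) \<ge> 0)"

definition nonpos_mat :: "real mat \<Rightarrow> bool" where
  "nonpos_mat M \<longleftrightarrow> (\<forall>i < dim_row M. \<forall>j < dim_col M. M $$ (i,j) \<le> 0)"

definition real_spectrum :: "real mat \<Rightarrow> complex set" where
  "real_spectrum M = spectrum (map_mat complex_of_real M)"

definition real_spectral_radius :: "real mat \<Rightarrow> real" where
  "real_spectral_radius M = spectral_radius (map_mat complex_of_real M)"

definition double_proper_splitting :: "real mat \<Rightarrow> real mat \<Rightarrow> real mat \<Rightarrow> real mat \<Rightarrow> bool" where
  "double_proper_splitting A P R S \<longleftrightarrow>
     P \<in> carrier_mat (dim_row A) (dim_col A) \<and> R \<in> carrier_mat (dim_row A) (dim_col A) \<and>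
     S \<in> carrier_mat (dim_row A) (dim_col A) \<and>
     A = P - R + S \<and> range_mat P = range_mat A \<and> null_mat P = null_mat A"

definition double_proper_regular :: "real mat \<Rightarrow> real mat \<Rightarrow> real mat \<Rightarrow> real mat \<Rightarrow> real mat \<Rightarrow> bool" where
  "double_proper_regular A P R S Pd \<longleftrightarrow> double_proper_splitting A P R S \<and>
     is_mp_inverse P Pd \<and> nonneg_mat Pd \<and> nonneg_mat R \<and> nonpos_mat S"

definition double_proper_weak_regular :: "real mat \<Rightarrow> real mat \<Rightarrow> real mat \<Rightarrow> real mat \<Rightarrow> real mat \<Rightarrow> bool" where
  "double_proper_weak_regular A P R S Pd \<longleftrightarrow> double_proper_splitting A P R S \<and>
     is_mp_inverse P Pd \<and> nonneg_mat Pd \<and> nonneg_mat (Pd * R) \<and> nonpos_mat (Pd * S)"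

definition W_mat :: "nat \<Rightarrow> real mat \<Rightarrow> real mat \<Rightarrow> real mat" where
  "W_mat n B C = four_block_mat B C (1\<^sub>m n) (0\<^sub>m n n)"

end

theory Submission
  imports Defs
begin

(* Write A_hat_i = (1 - S3 P_i^+) A, where ^+ is the Moore-Penrose inverse.  Since
   N(P_i) = N(A) = N(P3) is contained in N(S3), A_hat_i = P3 - G_i with
   G_i = R3 - S3 P_i^+ R_i + S3 P_i^+ S_i >= 0, and P3^+ G_i = B_i + C_i, where B_i, C_i >= 0 are
   the upper blocks of W_i3.  The modulus of an eigenvector of W = W_i3 for an eigenvalue of
   modulus rho = rho(W) is a vector (x, y) >= 0 with W (x, y) >= rho (x, y); eliminating y gives
   rho^2 x <= rho B x + C x.  If rho >= 1 this yields x <= P3^+ G x =: x', hence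
   A_hat_i x' = G (x - x') <= 0, and x' = A_hat_i^+ A_hat_i x' <= 0 because N(A_hat_i) is
   contained in N(P3); so x = 0.  For the comparison, the two hypotheses say B2 <= B1 and
   B1 + C1 <= B2 + C2; as rho(W13) <= 1 they turn the vector x for W13 into a
   rho(W13)-subinvariant vector of W23, and a Collatz-Wielandt bound gives rho(W13) <= rho(W23). *)

section \<open>Entrywise order and nonnegative matrices\<close>

lemma mult_mat_vec_index_sum:
  assumes "M \<in> carrier_mat a b" "v \<in> carrier_vec b" "i < a"
  shows "(M *\<^sub>v v) $ i = (\<Sum>j<b. M $$ (i, j) * v $ j)"
  using assms by (auto simp: scalar_prod_def atLeast0LessThan intro!: sum.cong)

lemma smult_mult_mat_vec:
  "M \<in> carrier_mat a b \<Longrightarrow> v \<in> carrier_vec b \<Longrightarrow> (c \<cdot>\<^sub>m M) *\<^sub>v v = c \<cdot>\<^sub>v (M *\<^sub>v v)"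
  by (intro eq_vecI) (auto simp: scalar_prod_def sum_distrib_left ac_simps)

lemma less_eq_vecD: "u \<le> v \<Longrightarrow> i < dim_vec v \<Longrightarrow> u $ i \<le> v $ i"
  unfolding less_eq_vec_def by auto

lemma smult_vec_mono:
  fixes u v :: "real vec"
  assumes "0 \<le> c" "u \<le> v"
  shows "c \<cdot>\<^sub>v u \<le> c \<cdot>\<^sub>v v"
  using assms unfolding less_eq_vec_def by (auto intro: mult_left_mono)

lemma minus_vec_nonpos:
  fixes u v :: "real vec"
  shows "u \<le> v \<Longrightarrow> v \<in> carrier_vec k \<Longrightarrow> u - v \<le> 0\<^sub>v k"
  unfolding less_eq_vec_def by auto

lemma minus_vec_eq_zero_iff:
  fixes u v :: "real vec"
  shows "u \<in> carrier_vec k \<Longrightarrow> v \<in> carrier_vec k \<Longrightarrow> u - v = 0\<^sub>v k \<longleftrightarrow> u = v"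
  by (auto simp: vec_eq_iff)

lemma zero_append_vec: "0\<^sub>v n @\<^sub>v 0\<^sub>v m = 0\<^sub>v (n + m)"
  by (intro eq_vecI) auto

lemma smult_append_vec: "c \<cdot>\<^sub>v (x @\<^sub>v y) = (c \<cdot>\<^sub>v x) @\<^sub>v (c \<cdot>\<^sub>v y)"
  by (intro eq_vecI) auto

lemma mult_mat_vec_mono:
  assumes M: "M \<in> carrier_mat a b" "nonneg_mat M" and v: "v \<in> carrier_vec b" and uv: "u \<le> v"
  shows "M *\<^sub>v u \<le> M *\<^sub>v v"
proof -
  have u: "u \<in> carrier_vec b" using uv v unfolding less_eq_vec_def carrier_vec_def by auto
  have "(M *\<^sub>v u) $ i \<le> (M *\<^sub>v v) $ i" if i: "i < a" for i
    unfolding mult_mat_vec_index_sum[OF M(1) u i] mult_mat_vec_index_sum[OF M(1) v i]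
    using M(2) uv v i unfolding nonneg_mat_def less_eq_vec_def
    by (intro sum_mono mult_left_mono) (use M(1) in auto)
  then show ?thesis using M(1) u v unfolding less_eq_vec_def by auto
qed

lemma mult_mat_vec_zero: "M \<in> carrier_mat a b \<Longrightarrow> M *\<^sub>v 0\<^sub>v b = (0\<^sub>v a :: real vec)"
  by (intro eq_vecI) auto

lemma mult_mat_vec_nonneg:
  assumes M: "M \<in> carrier_mat a b" "nonneg_mat M" and v: "0\<^sub>v b \<le> v"
  shows "0\<^sub>v a \<le> M *\<^sub>v v"
proof -
  have "v \<in> carrier_vec b" using v unfolding less_eq_vec_def carrier_vec_def by simp
  then have "M *\<^sub>v 0\<^sub>v b \<le> M *\<^sub>v v" by (rule mult_mat_vec_mono[OF M _ v])
  then show ?thesis unfolding mult_mat_vec_zero[OF M(1)] .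
qed

lemma mult_mat_vec_nonpos:
  assumes M: "M \<in> carrier_mat a b" "nonneg_mat M" and v: "v \<le> 0\<^sub>v b"
  shows "M *\<^sub>v v \<le> 0\<^sub>v a"
proof -
  have "M *\<^sub>v v \<le> M *\<^sub>v 0\<^sub>v b" by (rule mult_mat_vec_mono[OF M zero_carrier_vec v])
  then show ?thesis unfolding mult_mat_vec_zero[OF M(1)] .
qed

lemma mat_le_mult_vec_mono:
  assumes le: "mat_le M N" and M: "M \<in> carrier_mat a b" and v: "0\<^sub>v b \<le> v"
  shows "M *\<^sub>v v \<le> N *\<^sub>v v"
proof -
  have N: "N \<in> carrier_mat a b" using le M unfolding mat_le_def by auto
  have v': "v \<in> carrier_vec b" using v unfolding less_eq_vec_def carrier_vec_def by auto
  have "(M *\<^sub>v v) $ i \<le> (N *\<^sub>v v) $ i" if i: "i < a" for i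
    unfolding mult_mat_vec_index_sum[OF M v' i] mult_mat_vec_index_sum[OF N v' i]
    using le M v i unfolding mat_le_def less_eq_vec_def
    by (intro sum_mono mult_right_mono) auto
  then show ?thesis using M N v' unfolding less_eq_vec_def by auto
qed

lemma mat_le_diff_cancel:
  assumes "mat_le (X - Z) (X - Y)" "X \<in> carrier_mat a b" "Y \<in> carrier_mat a b" "Z \<in> carrier_mat a b"
  shows "mat_le Y Z"
  using assms unfolding mat_le_def by auto

lemma nonneg_mat_mult:
  "A \<in> carrier_mat a b \<Longrightarrow> B \<in> carrier_mat b c \<Longrightarrow> nonneg_mat A \<Longrightarrow> nonneg_mat B \<Longrightarrow>
    nonneg_mat (A * B)"
  unfolding nonneg_mat_def by (auto simp: scalar_prod_def intro!: sum_nonneg)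

lemma nonneg_nonpos_mat_mult:
  "A \<in> carrier_mat a b \<Longrightarrow> B \<in> carrier_mat b c \<Longrightarrow> nonneg_mat A \<Longrightarrow> nonpos_mat B \<Longrightarrow>
    nonpos_mat (A * B)"
  unfolding nonneg_mat_def nonpos_mat_def
  by (auto simp: scalar_prod_def mult_nonneg_nonpos intro!: sum_nonpos)

lemma nonpos_nonneg_mat_mult:
  "A \<in> carrier_mat a b \<Longrightarrow> B \<in> carrier_mat b c \<Longrightarrow> nonpos_mat A \<Longrightarrow> nonneg_mat B \<Longrightarrow>
    nonpos_mat (A * B)"
  unfolding nonneg_mat_def nonpos_mat_def
  by (auto simp: scalar_prod_def mult_nonpos_nonneg intro!: sum_nonpos)

lemma nonpos_mat_mult:
  "A \<in> carrier_mat a b \<Longrightarrow> B \<in> carrier_mat b c \<Longrightarrow> nonpos_mat A \<Longrightarrow> nonpos_mat B \<Longrightarrow>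
    nonneg_mat (A * B)"
  unfolding nonneg_mat_def nonpos_mat_def
  by (auto simp: scalar_prod_def mult_nonpos_nonpos intro!: sum_nonneg)

lemma nonneg_mat_diff:
  "X \<in> carrier_mat a b \<Longrightarrow> Y \<in> carrier_mat a b \<Longrightarrow> nonneg_mat X \<Longrightarrow> nonpos_mat Y \<Longrightarrow>
    nonneg_mat (X - Y)"
  unfolding nonneg_mat_def nonpos_mat_def by (simp add: order.trans[of _ 0])

lemma nonneg_mat_diff_add:
  assumes "X \<in> carrier_mat a b" "Y \<in> carrier_mat a b" "Z \<in> carrier_mat a b"
    and "nonneg_mat X" "nonpos_mat Y" "nonneg_mat Z"
  shows "nonneg_mat (X - Y + Z)"
proof -
  have "0 \<le> X $$ (i, j) - Y $$ (i, j) + Z $$ (i, j)" if "i < a" "j < b" for i j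
  proof -
    have "0 \<le> X $$ (i, j)" "Y $$ (i, j) \<le> 0" "0 \<le> Z $$ (i, j)"
      using assms that unfolding nonneg_mat_def nonpos_mat_def by auto
    then show ?thesis by simp
  qed
  then show ?thesis using assms(1-3) unfolding nonneg_mat_def by simp
qed

lemma nonneg_mat_pow: "W \<in> carrier_mat N N \<Longrightarrow> nonneg_mat W \<Longrightarrow> nonneg_mat (W ^\<^sub>m k)"
proof (induction k)
  case 0
  then show ?case by (auto simp: nonneg_mat_def)
next
  case (Suc k)
  then show ?case using nonneg_mat_mult[of "W ^\<^sub>m k" N N W N] by auto
qed

section \<open>Products and Moore--Penrose inverses\<close>

lemma mat_eq_mult_vecI:
  fixes M N :: "real mat"
  assumes "M \<in> carrier_mat a b" "N \<in> carrier_mat a b"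
    and "\<And>v. v \<in> carrier_vec b \<Longrightarrow> M *\<^sub>v v = N *\<^sub>v v"
  shows "M = N"
proof (rule eq_matI)
  fix i j assume ij: "i < dim_row N" "j < dim_col N"
  have "(M *\<^sub>v unit_vec b j) $ i = (N *\<^sub>v unit_vec b j) $ i" using assms(3)[of "unit_vec b j"] by simp
  then show "M $$ (i, j) = N $$ (i, j)" using ij assms(1,2) by (simp add: scalar_prod_right_unit)
qed (use assms in auto)

lemma assoc_mult_mat3_vec:
  assumes "A \<in> carrier_mat a b" "B \<in> carrier_mat b c" "C \<in> carrier_mat c d" "v \<in> carrier_vec d"
  shows "(A * B * C) *\<^sub>v v = A *\<^sub>v (B *\<^sub>v (C *\<^sub>v v))"
proof -
  have "(A * B * C) *\<^sub>v v = (A * B) *\<^sub>v (C *\<^sub>v v)" using assms by (intro assoc_mult_mat_vec) auto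
  also have "\<dots> = A *\<^sub>v (B *\<^sub>v (C *\<^sub>v v))" using assms by (intro assoc_mult_mat_vec) auto
  finally show ?thesis .
qed

lemma mult_diff_add_distrib_mat:
  fixes M :: "real mat"
  assumes "M \<in> carrier_mat a b" "X \<in> carrier_mat b c" "Y \<in> carrier_mat b c" "Z \<in> carrier_mat b c"
  shows "M * (X - Y + Z) = M * X - M * Y + M * Z"
proof -
  have "M * (X - Y + Z) = M * (X - Y) + M * Z"
    using assms by (intro mult_add_distrib_mat) auto
  also have "M * (X - Y) = M * X - M * Y" using assms(1-3) by (rule mult_minus_distrib_mat)
  finally show ?thesis .
qed

lemma range_mat_mult_subset:
  assumes M: "M \<in> carrier_mat a b" and X: "X \<in> carrier_mat b c"
  shows "range_mat (M * X) \<subseteq> range_mat M"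
proof
  fix y assume "y \<in> range_mat (M * X)"
  then obtain v where v: "v \<in> carrier_vec c" "y = (M * X) *\<^sub>v v"
    using X unfolding range_mat_def by auto
  then have "y = M *\<^sub>v (X *\<^sub>v v)" using M X by auto
  then show "y \<in> range_mat M" using M X v unfolding range_mat_def by auto
qed

lemma mp_inverse_carrier: "is_mp_inverse N Nd \<Longrightarrow> N \<in> carrier_mat a b \<Longrightarrow> Nd \<in> carrier_mat b a"
  unfolding is_mp_inverse_def by auto

lemma mp_inverse_range_subset:
  assumes mp: "is_mp_inverse N Nd" and N: "N \<in> carrier_mat a b"
    and M: "M \<in> carrier_mat a c" and range: "range_mat M \<subseteq> range_mat N"
  shows "N * Nd * M = M"
proof (rule mat_eq_mult_vecI)
  have Nd: "Nd \<in> carrier_mat b a" using mp_inverse_carrier[OF mp N] .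
  then show "N * Nd * M \<in> carrier_mat a c" using N M by auto
  fix v :: "real vec" assume v: "v \<in> carrier_vec c"
  then have "M *\<^sub>v v \<in> range_mat N" using M range unfolding range_mat_def by auto
  then obtain w where w: "w \<in> carrier_vec b" "M *\<^sub>v v = N *\<^sub>v w"
    using N unfolding range_mat_def by auto
  have "(N * Nd * M) *\<^sub>v v = N *\<^sub>v (Nd *\<^sub>v (N *\<^sub>v w))"
    unfolding assoc_mult_mat3_vec[OF N Nd M v] w(2) ..
  also have "\<dots> = (N * Nd * N) *\<^sub>v w" by (rule assoc_mult_mat3_vec[OF N Nd N w(1), symmetric])
  also have "\<dots> = M *\<^sub>v v" using mp w unfolding is_mp_inverse_def by simp
  finally show "(N * Nd * M) *\<^sub>v v = M *\<^sub>v v" .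
qed (use M in auto)

lemma mp_inverse_null_subset:
  assumes mp: "is_mp_inverse N Nd" and N: "N \<in> carrier_mat a b"
    and M: "M \<in> carrier_mat c b" and null: "null_mat N \<subseteq> null_mat M"
  shows "M * Nd * N = M"
proof (rule mat_eq_mult_vecI)
  have Nd: "Nd \<in> carrier_mat b a" using mp_inverse_carrier[OF mp N] .
  then show "M * Nd * N \<in> carrier_mat c b" using N M by auto
  fix v :: "real vec" assume v: "v \<in> carrier_vec b"
  define w where "w = Nd *\<^sub>v (N *\<^sub>v v)"
  have w: "w \<in> carrier_vec b" using Nd N v unfolding w_def by auto
  have "N *\<^sub>v w = (N * Nd * N) *\<^sub>v v"
    unfolding w_def by (rule assoc_mult_mat3_vec[OF N Nd N v, symmetric])
  also have "\<dots> = N *\<^sub>v v" using mp unfolding is_mp_inverse_def by simp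
  finally have "v - w \<in> null_mat N"
    using N v w unfolding null_mat_def by (auto simp: mult_minus_distrib_mat_vec)
  then have "M *\<^sub>v (v - w) = 0\<^sub>v c" using null M unfolding null_mat_def by auto
  then have "M *\<^sub>v v - M *\<^sub>v w = 0\<^sub>v c" using M v w by (simp add: mult_minus_distrib_mat_vec)
  then have "M *\<^sub>v v = M *\<^sub>v w"
    using minus_vec_eq_zero_iff[OF mult_mat_vec_carrier[OF M v] mult_mat_vec_carrier[OF M w]] by simp
  then show "(M * Nd * N) *\<^sub>v v = M *\<^sub>v v"
    unfolding assoc_mult_mat3_vec[OF M Nd N v] w_def by simp
qed (use M in auto)

lemma mp_inverse_absorb:
  assumes K: "is_mp_inverse K Kd" "K \<in> carrier_mat a b"
    and P: "is_mp_inverse P Q" "P \<in> carrier_mat c b"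
    and null: "null_mat K \<subseteq> null_mat P"
  shows "Kd * K * Q = Q"
proof -
  (* Kd * K and Q * P are the orthogonal projections onto the row spaces of K and P, and the
     null space inclusion says that the row space of P lies in that of K. *)
  have Kd: "Kd \<in> carrier_mat b a" and Q: "Q \<in> carrier_mat b c"
    using mp_inverse_carrier K P by blast+
  define E F where "E = Kd * K" and "F = Q * P"
  have E: "E \<in> carrier_mat b b" and F: "F \<in> carrier_mat b b"
    unfolding E_def F_def using K(2) Kd P(2) Q by auto
  have "F * E = Q * (P * Kd * K)"
    unfolding E_def F_def using K(2) Kd P(2) Q
    by (simp add: assoc_mult_mat[of Q b c P b "Kd * K" b] assoc_mult_mat[of P c b Kd a K b])
  also have "P * Kd * K = P" using mp_inverse_null_subset[OF K P(2) null] .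
  finally have FE: "F * E = F" unfolding F_def .
  have "E * F = transpose_mat E * transpose_mat F"
    using K(1) P(1) unfolding E_def F_def is_mp_inverse_def by simp
  also have "\<dots> = transpose_mat (F * E)" using E F by (simp add: transpose_mult)
  also have "\<dots> = F" using FE P(1) unfolding F_def is_mp_inverse_def by simp
  finally have EF: "E * F = F" .
  have "Q = F * Q" using P(1) unfolding F_def is_mp_inverse_def by simp
  then have "E * Q = (E * F) * Q" using E F Q by (metis assoc_mult_mat)
  then show ?thesis using EF \<open>Q = F * Q\<close> unfolding E_def by simp
qed

section \<open>Spectral radius of nonnegative matrices\<close>

lemma real_spectral_radius_nonneg:
  assumes "W \<in> carrier_mat N N" "N > 0"
  shows "0 \<le> real_spectral_radius W"
proof -
  have "map_mat complex_of_real W \<in> carrier_mat N N" using assms(1) by auto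
  from spectral_radius_mem_max(1)[OF this assms(2)] show ?thesis
    unfolding real_spectral_radius_def by auto
qed

lemma real_spectrum_fixed_vector_zero:
  assumes "1 \<notin> real_spectrum M" "M \<in> carrier_mat a a" "z \<in> carrier_vec a" "M *\<^sub>v z = z"
  shows "z = 0\<^sub>v a"
proof (rule ccontr)
  assume "z \<noteq> 0\<^sub>v a"
  have "map_mat complex_of_real M *\<^sub>v map_vec complex_of_real z = map_vec complex_of_real (M *\<^sub>v z)"
    by (rule of_real_hom.mult_mat_vec_hom[OF assms(2,3), symmetric])
  also have "\<dots> = 1 \<cdot>\<^sub>v map_vec complex_of_real z" using assms(4) by simp
  finally have "eigenvector (map_mat complex_of_real M) (map_vec complex_of_real z) 1"
    unfolding eigenvector_def using assms(2,3) \<open>z \<noteq> 0\<^sub>v a\<close> by auto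
  then show False using assms(1) unfolding real_spectrum_def spectrum_def eigenvalue_def by auto
qed

lemma nonneg_mat_subinvariant_vector:
  assumes W: "W \<in> carrier_mat N N" "nonneg_mat W" and N: "N > 0"
  obtains u where "u \<in> carrier_vec N" "0\<^sub>v N \<le> u" "u \<noteq> 0\<^sub>v N"
    "real_spectral_radius W \<cdot>\<^sub>v u \<le> W *\<^sub>v u"
proof -
  define Wc where "Wc = map_mat complex_of_real W"
  have Wc: "Wc \<in> carrier_mat N N" using W unfolding Wc_def by auto
  from spectral_radius_mem_max(1)[OF Wc N] obtain k where "k \<in> spectrum Wc"
    and rk: "real_spectral_radius W = cmod k" unfolding real_spectral_radius_def Wc_def by auto
  then obtain v where "eigenvector Wc v k" unfolding spectrum_def eigenvalue_def by auto
  then have v: "v \<in> carrier_vec N" "v \<noteq> 0\<^sub>v N" "Wc *\<^sub>v v = k \<cdot>\<^sub>v v"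
    unfolding eigenvector_def using Wc by auto
  define u where "u = vec N (\<lambda>i. cmod (v $ i))"
  have u: "u \<in> carrier_vec N" "0\<^sub>v N \<le> u" unfolding u_def less_eq_vec_def by auto
  have "u \<noteq> 0\<^sub>v N"
  proof
    assume "u = 0\<^sub>v N"
    then have "\<forall>i<N. v $ i = 0" unfolding u_def by (metis index_vec index_zero_vec(1) norm_eq_zero)
    then show False using v(1,2) by (auto intro: eq_vecI)
  qed
  moreover have "real_spectral_radius W * u $ i \<le> (W *\<^sub>v u) $ i" if i: "i < N" for i
  proof -
    have "real_spectral_radius W * u $ i = cmod ((Wc *\<^sub>v v) $ i)"
      using i v(1) unfolding rk v(3) u_def by (simp add: norm_mult)
    also have "\<dots> = cmod (\<Sum>j<N. Wc $$ (i, j) * v $ j)"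
      by (simp add: mult_mat_vec_index_sum[OF Wc v(1) i])
    also have "\<dots> \<le> (\<Sum>j<N. cmod (Wc $$ (i, j) * v $ j))" by (rule norm_sum)
    also have "\<dots> = (\<Sum>j<N. W $$ (i, j) * u $ j)"
      using i W unfolding Wc_def u_def nonneg_mat_def by (intro sum.cong) (auto simp: norm_mult)
    also have "\<dots> = (W *\<^sub>v u) $ i" by (simp add: mult_mat_vec_index_sum[OF W(1) u(1) i])
    finally show ?thesis .
  qed
  then have "real_spectral_radius W \<cdot>\<^sub>v u \<le> W *\<^sub>v u"
    using u W(1) unfolding less_eq_vec_def by auto
  ultimately show thesis using that u by blast
qed

lemma real_spectral_radius_smult_le:
  assumes W: "W \<in> carrier_mat N N" and N: "N > 0" and c: "c > 0"
  shows "real_spectral_radius (c \<cdot>\<^sub>m W) \<le> c * real_spectral_radius W"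
proof -
  define Wc where "Wc = map_mat complex_of_real W"
  have Wc: "Wc \<in> carrier_mat N N" using W unfolding Wc_def by auto
  have cWc: "map_mat complex_of_real (c \<cdot>\<^sub>m W) = of_real c \<cdot>\<^sub>m Wc"
    unfolding Wc_def by (intro eq_matI) auto
  have "of_real c \<cdot>\<^sub>m Wc \<in> carrier_mat N N" using Wc by auto
  from spectral_radius_mem_max(1)[OF this N] obtain k where "k \<in> spectrum (of_real c \<cdot>\<^sub>m Wc)"
    and rk: "real_spectral_radius (c \<cdot>\<^sub>m W) = cmod k"
    unfolding real_spectral_radius_def cWc by auto
  then obtain v where v: "v \<in> carrier_vec N" "v \<noteq> 0\<^sub>v N" "of_real c \<cdot>\<^sub>v (Wc *\<^sub>v v) = k \<cdot>\<^sub>v v"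
    unfolding spectrum_def eigenvalue_def eigenvector_def using Wc by (auto simp: smult_mult_mat_vec)
  have "Wc *\<^sub>v v = (k / of_real c) \<cdot>\<^sub>v v"
  proof (rule eq_vecI)
    fix i assume "i < dim_vec ((k / of_real c) \<cdot>\<^sub>v v)"
    then have i: "i < N" using v(1) by simp
    have "of_real c * (Wc *\<^sub>v v) $ i = k * v $ i"
      using arg_cong[OF v(3), of "\<lambda>w. w $ i"] i Wc v(1) by simp
    then show "(Wc *\<^sub>v v) $ i = ((k / of_real c) \<cdot>\<^sub>v v) $ i"
      using i v(1) c by (simp add: field_simps)
  qed (use Wc v in auto)
  then have "k / of_real c \<in> spectrum Wc"
    using v Wc unfolding spectrum_def eigenvalue_def eigenvector_def by auto
  from spectral_radius_mem_max(2)[OF Wc N imageI[OF this, of norm]]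
  have "cmod k / c \<le> real_spectral_radius W"
    unfolding real_spectral_radius_def Wc_def using c by (simp add: norm_divide)
  then show ?thesis using rk c by (simp add: divide_le_eq mult.commute)
qed

lemma real_spectral_radius_less_1_pow_bounded:
  assumes W: "W \<in> carrier_mat N N" and "real_spectral_radius W < 1"
  obtains c where "\<And>k i j. i < N \<Longrightarrow> j < N \<Longrightarrow> \<bar>(W ^\<^sub>m k) $$ (i, j)\<bar> \<le> c"
proof -
  have Wc: "map_mat complex_of_real W \<in> carrier_mat N N" using W by auto
  from spectral_radius_jnf_norm_bound_less_1_upper_triangular[OF Wc] assms(2)
  obtain c where c: "\<And>k. norm_bound (map_mat complex_of_real W ^\<^sub>m k) c"
    unfolding real_spectral_radius_def by auto
  have "\<bar>(W ^\<^sub>m k) $$ (i, j)\<bar> \<le> c" if "i < N" "j < N" for k i j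
    using c[of k] that W unfolding norm_bound_def of_real_hom.mat_hom_pow[OF W, symmetric] by auto
  then show thesis using that by blast
qed

lemma subinvariant_vector_pow:
  assumes W: "W \<in> carrier_mat N N" "nonneg_mat W" and z: "z \<in> carrier_vec N"
    and q: "0 \<le> q" and sub: "q \<cdot>\<^sub>v z \<le> W *\<^sub>v z"
  shows "q ^ k \<cdot>\<^sub>v z \<le> W ^\<^sub>m k *\<^sub>v z"
proof (induction k)
  case 0
  show ?case using W z by simp
next
  case (Suc k)
  have Wk: "W ^\<^sub>m k \<in> carrier_mat N N" "nonneg_mat (W ^\<^sub>m k)"
    using W by (auto intro: nonneg_mat_pow)
  have "q ^ Suc k \<cdot>\<^sub>v z = q \<cdot>\<^sub>v (q ^ k \<cdot>\<^sub>v z)" by (simp add: smult_smult_assoc)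
  also have "\<dots> \<le> q \<cdot>\<^sub>v (W ^\<^sub>m k *\<^sub>v z)" using Suc.IH q by (rule smult_vec_mono[rotated])
  also have "\<dots> = W ^\<^sub>m k *\<^sub>v (q \<cdot>\<^sub>v z)" using Wk z by (simp add: mult_mat_vec)
  also have "\<dots> \<le> W ^\<^sub>m k *\<^sub>v (W *\<^sub>v z)" using Wk W z sub by (intro mult_mat_vec_mono) auto
  also have "\<dots> = W ^\<^sub>m Suc k *\<^sub>v z" by (simp add: assoc_mult_mat_vec[OF Wk(1) W(1) z])
  finally show ?case .
qed

lemma subinvariant_spectral_radius_ge:
  assumes W: "W \<in> carrier_mat N N" "nonneg_mat W"
    and z: "z \<in> carrier_vec N" "0\<^sub>v N \<le> z" "z \<noteq> 0\<^sub>v N"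
    and \<mu>: "\<mu> > 0" and sub: "\<mu> \<cdot>\<^sub>v z \<le> W *\<^sub>v z"
  shows "\<mu> \<le> real_spectral_radius W"
proof (rule ccontr)
  (* Rescale W by some m strictly between rho(W) and mu: the powers of W / m stay bounded,
     whereas the subinvariance makes them grow like (mu / m)^k on z. *)
  define \<rho> where "\<rho> = real_spectral_radius W"
  assume "\<not> \<mu> \<le> real_spectral_radius W"
  then have "\<rho> < \<mu>" unfolding \<rho>_def by simp
  obtain i where i: "i < N" "z $ i \<noteq> 0"
    using z(1,3) by (metis carrier_vecD eq_vecI index_zero_vec)
  then have zi: "z $ i > 0" using z(2) unfolding less_eq_vec_def by force
  have "0 \<le> \<rho>" unfolding \<rho>_def using W(1) i(1) by (intro real_spectral_radius_nonneg) auto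
  define m where "m = (\<rho> + \<mu>) / 2"
  have m: "0 < m" "\<rho> < m" "m < \<mu>" using \<open>0 \<le> \<rho>\<close> \<open>\<rho> < \<mu>\<close> unfolding m_def by auto
  define V where "V = (1 / m) \<cdot>\<^sub>m W"
  have V: "V \<in> carrier_mat N N" "nonneg_mat V"
    using W m unfolding V_def nonneg_mat_def by auto
  have "real_spectral_radius V \<le> \<rho> / m"
    using real_spectral_radius_smult_le[OF W(1) _, of "1 / m"] i(1) m unfolding V_def \<rho>_def by auto
  also have "\<dots> < 1" using m by simp
  finally obtain c where c: "\<And>k j. j < N \<Longrightarrow> \<bar>(V ^\<^sub>m k) $$ (i, j)\<bar> \<le> c"
    using real_spectral_radius_less_1_pow_bounded[OF V(1)] i(1) by metis
  define q where "q = \<mu> / m"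
  have "q > 1" using m unfolding q_def by simp
  have "q \<cdot>\<^sub>v z = (1 / m) \<cdot>\<^sub>v (\<mu> \<cdot>\<^sub>v z)" unfolding q_def by (simp add: smult_smult_assoc)
  also have "\<dots> \<le> (1 / m) \<cdot>\<^sub>v (W *\<^sub>v z)" using sub m by (intro smult_vec_mono) auto
  also have "\<dots> = V *\<^sub>v z" unfolding V_def using W z by (simp add: smult_mult_mat_vec)
  finally have grow: "q ^ k \<cdot>\<^sub>v z \<le> V ^\<^sub>m k *\<^sub>v z" for k
    using \<open>q > 1\<close> by (intro subinvariant_vector_pow[OF V z(1)]) auto
  have bound: "q ^ k * z $ i \<le> c * (\<Sum>j<N. z $ j)" for k
  proof -
    have "q ^ k * z $ i \<le> (V ^\<^sub>m k *\<^sub>v z) $ i"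
      using grow[of k] i(1) z(1) V(1) unfolding less_eq_vec_def by auto
    also have "\<dots> = (\<Sum>j<N. (V ^\<^sub>m k) $$ (i, j) * z $ j)"
      using V(1) z(1) i(1) by (intro mult_mat_vec_index_sum) auto
    also have "\<dots> \<le> (\<Sum>j<N. c * z $ j)"
      using c z(2) unfolding less_eq_vec_def
      by (intro sum_mono mult_right_mono) (auto simp: abs_le_iff)
    finally show ?thesis by (simp add: sum_distrib_left)
  qed
  obtain k where "c * (\<Sum>j<N. z $ j) / z $ i < q ^ k"
    using real_arch_pow[OF \<open>q > 1\<close>] by blast
  then have "c * (\<Sum>j<N. z $ j) < q ^ k * z $ i" using zi by (simp add: divide_less_eq)
  with bound[of k] show False by simp
qed

section \<open>The block iteration matrix\<close>

lemma W_mat_carrier: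
  "B \<in> carrier_mat n n \<Longrightarrow> C \<in> carrier_mat n n \<Longrightarrow> W_mat n B C \<in> carrier_mat (n + n) (n + n)"
  unfolding W_mat_def by (rule four_block_carrier_mat) auto

lemma W_mat_nonneg:
  "B \<in> carrier_mat n n \<Longrightarrow> C \<in> carrier_mat n n \<Longrightarrow> nonneg_mat B \<Longrightarrow> nonneg_mat C \<Longrightarrow>
    nonneg_mat (W_mat n B C)"
  unfolding nonneg_mat_def W_mat_def by (auto simp: one_mat_def)

lemma W_mat_mult_append:
  assumes "B \<in> carrier_mat n n" "C \<in> carrier_mat n n" "x \<in> carrier_vec n" "y \<in> carrier_vec n"
  shows "W_mat n B C *\<^sub>v (x @\<^sub>v y) = (B *\<^sub>v x + C *\<^sub>v y) @\<^sub>v x"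
proof -
  have "W_mat n B C *\<^sub>v (x @\<^sub>v y) = (B *\<^sub>v x + C *\<^sub>v y) @\<^sub>v (1\<^sub>m n *\<^sub>v x + 0\<^sub>m n n *\<^sub>v y)"
    unfolding W_mat_def using assms by (intro four_block_mat_mult_vec) auto
  also have "1\<^sub>m n *\<^sub>v x + 0\<^sub>m n n *\<^sub>v y = x" using assms by auto
  finally show ?thesis .
qed

lemma W_mat_perron_vector:
  assumes B: "B \<in> carrier_mat n n" "nonneg_mat B" and C: "C \<in> carrier_mat n n" "nonneg_mat C"
    and n: "n > 0" and pos: "real_spectral_radius (W_mat n B C) > 0"
  obtains x where "x \<in> carrier_vec n" "0\<^sub>v n \<le> x" "x \<noteq> 0\<^sub>v n"
    "(real_spectral_radius (W_mat n B C))\<^sup>2 \<cdot>\<^sub>v x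
       \<le> real_spectral_radius (W_mat n B C) \<cdot>\<^sub>v (B *\<^sub>v x) + C *\<^sub>v x"
proof -
  let ?r = "real_spectral_radius (W_mat n B C)"
  obtain u where u: "u \<in> carrier_vec (n + n)" "0\<^sub>v (n + n) \<le> u" "u \<noteq> 0\<^sub>v (n + n)"
    "?r \<cdot>\<^sub>v u \<le> W_mat n B C *\<^sub>v u"
    using nonneg_mat_subinvariant_vector[OF W_mat_carrier[OF B(1) C(1)]
        W_mat_nonneg[OF B(1) C(1) B(2) C(2)]] n by auto
  define x y where "x = vec_first u n" and "y = vec_last u n"
  have xy: "x \<in> carrier_vec n" "y \<in> carrier_vec n" and u_eq: "u = x @\<^sub>v y"
    unfolding x_def y_def using u(1) by auto
  have "0\<^sub>v n @\<^sub>v 0\<^sub>v n \<le> x @\<^sub>v y" using u(2) u_eq by (simp add: zero_append_vec)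
  then have x0: "0\<^sub>v n \<le> x" and y0: "0\<^sub>v n \<le> y"
    unfolding append_vec_le[OF zero_carrier_vec xy(1)] by auto
  have "(?r \<cdot>\<^sub>v x) @\<^sub>v (?r \<cdot>\<^sub>v y) \<le> (B *\<^sub>v x + C *\<^sub>v y) @\<^sub>v x"
    using u(4) unfolding u_eq smult_append_vec W_mat_mult_append[OF B(1) C(1) xy] .
  then have rx: "?r \<cdot>\<^sub>v x \<le> B *\<^sub>v x + C *\<^sub>v y" and ry: "?r \<cdot>\<^sub>v y \<le> x"
    using append_vec_le[of "?r \<cdot>\<^sub>v x" n] xy B(1) C(1) by auto
  have "x \<noteq> 0\<^sub>v n"
  proof
    assume "x = 0\<^sub>v n"
    then have "y = 0\<^sub>v n"
      using ry y0 pos xy(2) unfolding less_eq_vec_def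
      by (intro eq_vecI) (auto simp: mult_le_0_iff intro: order.antisym)
    then show False using u(3) u_eq \<open>x = 0\<^sub>v n\<close> by auto
  qed
  have "?r\<^sup>2 \<cdot>\<^sub>v x = ?r \<cdot>\<^sub>v (?r \<cdot>\<^sub>v x)" by (simp add: smult_smult_assoc power2_eq_square)
  also have "\<dots> \<le> ?r \<cdot>\<^sub>v (B *\<^sub>v x + C *\<^sub>v y)" using rx pos by (intro smult_vec_mono) auto
  also have "\<dots> = ?r \<cdot>\<^sub>v (B *\<^sub>v x) + C *\<^sub>v (?r \<cdot>\<^sub>v y)"
    using B(1) C(1) xy by (simp add: smult_add_distrib_vec[of _ n] mult_mat_vec)
  also have "\<dots> \<le> ?r \<cdot>\<^sub>v (B *\<^sub>v x) + C *\<^sub>v x"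
    using mult_mat_vec_mono[OF C xy(1) ry] B(1) C(1) xy unfolding less_eq_vec_def by auto
  finally show thesis using that xy(1) x0 \<open>x \<noteq> 0\<^sub>v n\<close> by blast
qed

lemma W_mat_spectral_radius_ge:
  assumes B: "B \<in> carrier_mat n n" "nonneg_mat B" and C: "C \<in> carrier_mat n n" "nonneg_mat C"
    and x: "x \<in> carrier_vec n" "0\<^sub>v n \<le> x" "x \<noteq> 0\<^sub>v n"
    and \<mu>: "\<mu> > 0" and sub: "\<mu>\<^sup>2 \<cdot>\<^sub>v x \<le> \<mu> \<cdot>\<^sub>v (B *\<^sub>v x) + C *\<^sub>v x"
  shows "\<mu> \<le> real_spectral_radius (W_mat n B C)"
proof (rule subinvariant_spectral_radius_ge)
  let ?z = "(\<mu> \<cdot>\<^sub>v x) @\<^sub>v x"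
  show "?z \<in> carrier_vec (n + n)" using x(1) by auto
  have "0\<^sub>v n \<le> \<mu> \<cdot>\<^sub>v x" using x(2) \<mu> unfolding less_eq_vec_def by auto
  then have "0\<^sub>v n @\<^sub>v 0\<^sub>v n \<le> ?z" using x by (subst append_vec_le) auto
  then show "0\<^sub>v (n + n) \<le> ?z" by (simp add: zero_append_vec)
  show "?z \<noteq> 0\<^sub>v (n + n)"
  proof
    assume "?z = 0\<^sub>v (n + n)"
    then have "(?z) $ (n + i) = 0" if "i < n" for i using that by simp
    then have "x = 0\<^sub>v n" using x(1) by (intro eq_vecI) auto
    then show False using x(3) by simp
  qed
  have "\<mu> \<cdot>\<^sub>v (\<mu> \<cdot>\<^sub>v x) \<le> B *\<^sub>v (\<mu> \<cdot>\<^sub>v x) + C *\<^sub>v x"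
    using sub B(1) x(1) by (simp add: smult_smult_assoc power2_eq_square mult_mat_vec)
  then have "(\<mu> \<cdot>\<^sub>v (\<mu> \<cdot>\<^sub>v x)) @\<^sub>v (\<mu> \<cdot>\<^sub>v x) \<le> (B *\<^sub>v (\<mu> \<cdot>\<^sub>v x) + C *\<^sub>v x) @\<^sub>v (\<mu> \<cdot>\<^sub>v x)"
    using x(1) B(1) C(1) by (subst append_vec_le) auto
  then show "\<mu> \<cdot>\<^sub>v ?z \<le> W_mat n B C *\<^sub>v ?z"
    unfolding smult_append_vec using W_mat_mult_append[OF B(1) C(1)] x(1) by simp
qed (use B C \<mu> in \<open>auto intro: W_mat_carrier W_mat_nonneg\<close>)

lemma W_mat_spectral_radius_mono:
  assumes B1: "B1 \<in> carrier_mat n n" "nonneg_mat B1" and C1: "C1 \<in> carrier_mat n n" "nonneg_mat C1"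
    and B2: "B2 \<in> carrier_mat n n" "nonneg_mat B2" and C2: "C2 \<in> carrier_mat n n" "nonneg_mat C2"
    and n: "n > 0" and le_1: "real_spectral_radius (W_mat n B1 C1) \<le> 1"
    and le_B: "mat_le B2 B1" and le_BC: "mat_le (B1 + C1) (B2 + C2)"
  shows "real_spectral_radius (W_mat n B1 C1) \<le> real_spectral_radius (W_mat n B2 C2)"
proof (cases "real_spectral_radius (W_mat n B1 C1) > 0")
  case False
  then show ?thesis
    using real_spectral_radius_nonneg[OF W_mat_carrier[OF B2(1) C2(1)]] n by simp
next
  case True
  let ?r = "real_spectral_radius (W_mat n B1 C1)"
  obtain x where x: "x \<in> carrier_vec n" "0\<^sub>v n \<le> x" "x \<noteq> 0\<^sub>v n"
    and sub: "?r\<^sup>2 \<cdot>\<^sub>v x \<le> ?r \<cdot>\<^sub>v (B1 *\<^sub>v x) + C1 *\<^sub>v x"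
    using W_mat_perron_vector[OF B1 C1 n True] by blast
  have "B2 *\<^sub>v x \<le> B1 *\<^sub>v x" using mat_le_mult_vec_mono[OF le_B B2(1) x(2)] .
  moreover have "B1 *\<^sub>v x + C1 *\<^sub>v x \<le> B2 *\<^sub>v x + C2 *\<^sub>v x"
    using mat_le_mult_vec_mono[OF le_BC add_carrier_mat[OF C1(1)] x(2)] B1(1) C1(1) B2(1) C2(1) x(1)
    by (simp add: add_mult_distrib_mat_vec)
  ultimately have "?r\<^sup>2 * x $ i \<le> ?r * (B2 *\<^sub>v x) $ i + (C2 *\<^sub>v x) $ i" if i: "i < n" for i
  proof -
    (* the loss r (B2 - B1) x is covered by (C2 - C1) x >= (B1 - B2) x because r <= 1 *)
    have "0 \<le> (1 - ?r) * ((B1 *\<^sub>v x) $ i - (B2 *\<^sub>v x) $ i)"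
      using le_1 \<open>B2 *\<^sub>v x \<le> B1 *\<^sub>v x\<close> i B1(1) B2(1) unfolding less_eq_vec_def
      by (auto intro!: mult_nonneg_nonneg)
    moreover have "?r\<^sup>2 * x $ i \<le> ?r * (B1 *\<^sub>v x) $ i + (C1 *\<^sub>v x) $ i"
      using sub i B1(1) C1(1) x(1) unfolding less_eq_vec_def by simp
    moreover have "(B1 *\<^sub>v x) $ i + (C1 *\<^sub>v x) $ i \<le> (B2 *\<^sub>v x) $ i + (C2 *\<^sub>v x) $ i"
      using \<open>B1 *\<^sub>v x + C1 *\<^sub>v x \<le> B2 *\<^sub>v x + C2 *\<^sub>v x\<close> i B1(1) C1(1) B2(1) C2(1)
      unfolding less_eq_vec_def by simp
    ultimately show ?thesis by (simp add: algebra_simps)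
  qed
  then have "?r\<^sup>2 \<cdot>\<^sub>v x \<le> ?r \<cdot>\<^sub>v (B2 *\<^sub>v x) + C2 *\<^sub>v x"
    using B2(1) C2(1) x(1) unfolding less_eq_vec_def by simp
  then show ?thesis by (rule W_mat_spectral_radius_ge[OF B2 C2 x True])
qed

section \<open>The induced splitting\<close>

locale induced_splitting =
  fixes m n :: nat and A P R S Pd P3 R3 S3 Q Ahd :: "real mat"
  assumes A: "A \<in> carrier_mat m n"
    and weak_regular: "double_proper_weak_regular A P R S Pd"
    and regular: "double_proper_regular A P3 R3 S3 Q"
    and null_P3_S3: "null_mat P3 \<subseteq> null_mat S3"
    and range_S3_P3: "range_mat S3 \<subseteq> range_mat P3"
    and one_notin_spectrum: "1 \<notin> real_spectrum (S3 * Pd)"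
    and A_hat_mp_inverse: "is_mp_inverse ((1\<^sub>m m - S3 * Pd) * A) Ahd"
    and A_hat_mp_inverse_nonneg: "nonneg_mat Ahd"
begin

(* In the paper's notation R' = R3 - S3 Pd R and S' = - S3 Pd S give the induced splitting
   A_hat = P3 - R' + S' (lemma A_hat_eq), with G = R' - S'; B and C are the upper blocks of W. *)
abbreviation "A_hat \<equiv> (1\<^sub>m m - S3 * Pd) * A"
abbreviation "G \<equiv> R3 - S3 * Pd * R + S3 * Pd * S"
abbreviation "B \<equiv> Q * R3 - Q * S3 * Pd * R"
abbreviation "C \<equiv> Q * S3 * Pd * S"

lemma splitting:
  "A = P - R + S" "null_mat P = null_mat A" "is_mp_inverse P Pd"
  "nonneg_mat (Pd * R)" "nonpos_mat (Pd * S)"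
  "A = P3 - R3 + S3" "range_mat P3 = range_mat A" "null_mat P3 = null_mat A"
  "is_mp_inverse P3 Q" "nonneg_mat Q" "nonneg_mat R3" "nonpos_mat S3"
  using weak_regular regular
  unfolding double_proper_weak_regular_def double_proper_regular_def double_proper_splitting_def
  by auto

lemma carrier:
  "P \<in> carrier_mat m n" "R \<in> carrier_mat m n" "S \<in> carrier_mat m n"
  "P3 \<in> carrier_mat m n" "R3 \<in> carrier_mat m n" "S3 \<in> carrier_mat m n"
  "Pd \<in> carrier_mat n m" "Q \<in> carrier_mat n m" "Ahd \<in> carrier_mat n m"
  "A_hat \<in> carrier_mat m n" "S3 * Pd \<in> carrier_mat m m"
proof -
  show PRS: "P \<in> carrier_mat m n" "R \<in> carrier_mat m n" "S \<in> carrier_mat m n"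
    "P3 \<in> carrier_mat m n" "R3 \<in> carrier_mat m n" "S3 \<in> carrier_mat m n"
    using weak_regular regular A
    unfolding double_proper_weak_regular_def double_proper_regular_def double_proper_splitting_def
    by auto
  show Pd: "Pd \<in> carrier_mat n m" "Q \<in> carrier_mat n m"
    using mp_inverse_carrier splitting(3,9) PRS(1,4) by blast+
  then show "S3 * Pd \<in> carrier_mat m m" using PRS by auto
  show "A_hat \<in> carrier_mat m n" using A PRS Pd by auto
  then show "Ahd \<in> carrier_mat n m" using mp_inverse_carrier[OF A_hat_mp_inverse] by blast
qed

lemma carrier_G_B_C: "G \<in> carrier_mat m n" "B \<in> carrier_mat n n" "C \<in> carrier_mat n n"
  using carrier by auto

lemma S3_Pd_P: "S3 * Pd * P = S3"
  using splitting(2,8) null_P3_S3 by (intro mp_inverse_null_subset[OF splitting(3) carrier(1,6)]) auto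

lemma Q_S3_Pd_assoc:
  assumes "X \<in> carrier_mat m k"
  shows "Q * (S3 * Pd * X) = Q * S3 * Pd * X"
proof -
  have "Q * (S3 * Pd * X) = Q * (S3 * Pd) * X" using carrier assms by (intro assoc_mult_mat[symmetric]) auto
  also have "Q * (S3 * Pd) = Q * S3 * Pd" using carrier by (intro assoc_mult_mat[symmetric]) auto
  finally show ?thesis .
qed

lemma P3_Q_S3_Pd:
  assumes "X \<in> carrier_mat m k"
  shows "P3 * Q * (S3 * Pd * X) = S3 * Pd * X"
proof (rule mp_inverse_range_subset[OF splitting(9) carrier(4)])
  have "range_mat (S3 * Pd * X) \<subseteq> range_mat (S3 * Pd)"
    using carrier assms by (intro range_mat_mult_subset) auto
  also have "\<dots> \<subseteq> range_mat S3" using carrier by (intro range_mat_mult_subset) auto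
  finally show "range_mat (S3 * Pd * X) \<subseteq> range_mat P3" using range_S3_P3 by simp
qed (use carrier assms in auto)

lemma P3_Q_R3: "P3 * Q * R3 = R3"
proof -
  have R3: "R3 = P3 - A + S3" using carrier by (intro eq_matI) (simp_all add: splitting(6))
  have PQP: "P3 * Q * P3 = P3" using splitting(9) unfolding is_mp_inverse_def by simp
  have PQA: "P3 * Q * A = A"
    using splitting(7) by (intro mp_inverse_range_subset[OF splitting(9) carrier(4) A]) simp
  have PQS: "P3 * Q * S3 = S3"
    by (rule mp_inverse_range_subset[OF splitting(9) carrier(4) carrier(6) range_S3_P3])
  have "P3 * Q * (P3 - A + S3) = P3 * Q * P3 - P3 * Q * A + P3 * Q * S3"
    using carrier A by (intro mult_diff_add_distrib_mat[of _ m m _ n]) auto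
  then show ?thesis unfolding PQP PQA PQS R3[symmetric] .
qed

lemma A_hat_eq: "A_hat = P3 - G"
proof -
  have "A_hat = A - S3 * Pd * A"
    using carrier A by (simp add: minus_mult_distrib_mat[of _ m m _ _ n])
  also have "S3 * Pd * A = S3 * Pd * (P - R + S)" using splitting(1) by simp
  also have "\<dots> = S3 * Pd * P - S3 * Pd * R + S3 * Pd * S"
    using carrier by (intro mult_diff_add_distrib_mat[of _ m m _ n]) auto
  also have "A - (S3 * Pd * P - S3 * Pd * R + S3 * Pd * S) = P3 - G"
    unfolding S3_Pd_P using carrier by (intro eq_matI) (simp_all add: splitting(6))
  finally show ?thesis .
qed

lemma Q_G_eq: "Q * G = B + C"
proof -
  have "Q * G = Q * R3 - Q * (S3 * Pd * R) + Q * (S3 * Pd * S)"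
    using carrier by (intro mult_diff_add_distrib_mat[of _ n m _ n]) auto
  then show ?thesis using carrier by (simp only: Q_S3_Pd_assoc)
qed

lemma P3_Q_G: "P3 * Q * G = G"
proof -
  have "P3 * Q * G = P3 * Q * R3 - P3 * Q * (S3 * Pd * R) + P3 * Q * (S3 * Pd * S)"
    using carrier by (intro mult_diff_add_distrib_mat[of _ m m _ n]) auto
  then show ?thesis using carrier by (simp only: P3_Q_R3 P3_Q_S3_Pd)
qed

lemma nonneg_G_B_C: "nonneg_mat G" "nonneg_mat B" "nonneg_mat C"
proof -
  have "S3 * Pd * X = S3 * (Pd * X)" if "X \<in> carrier_mat m n" for X
    using carrier that by (intro assoc_mult_mat[of _ m n _ m _ n]) auto
  then have S3PdR: "nonpos_mat (S3 * Pd * R)" and S3PdS: "nonneg_mat (S3 * Pd * S)"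
    using carrier splitting(4,5,12) nonpos_nonneg_mat_mult[of S3 m n "Pd * R" n]
      nonpos_mat_mult[of S3 m n "Pd * S" n] by auto
  show "nonneg_mat G"
    using S3PdR S3PdS splitting(11) carrier by (intro nonneg_mat_diff_add[of _ m n]) auto
  have "nonneg_mat (Q * R3)" using carrier splitting(10,11) by (intro nonneg_mat_mult) auto
  moreover have "nonpos_mat (Q * (S3 * Pd * R))"
    using carrier by (intro nonneg_nonpos_mat_mult[OF carrier(8) _ splitting(10) S3PdR]) auto
  ultimately show "nonneg_mat B"
    unfolding Q_S3_Pd_assoc[OF carrier(2), symmetric] using carrier
    by (intro nonneg_mat_diff[of _ n n]) auto
  have "nonneg_mat (Q * (S3 * Pd * S))"
    using carrier by (intro nonneg_mat_mult[OF carrier(8) _ splitting(10) S3PdS]) auto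
  then show "nonneg_mat C" unfolding Q_S3_Pd_assoc[OF carrier(3)] .
qed

lemma null_A_hat: "null_mat A_hat \<subseteq> null_mat P3"
proof
  fix x assume "x \<in> null_mat A_hat"
  then have x: "x \<in> carrier_vec n" "A_hat *\<^sub>v x = 0\<^sub>v m"
    using carrier unfolding null_mat_def by auto
  have Ax: "A *\<^sub>v x \<in> carrier_vec m" using A x by auto
  have I: "1\<^sub>m m - S3 * Pd \<in> carrier_mat m m" by (rule minus_carrier_mat[OF carrier(11)])
  have "A_hat *\<^sub>v x = (1\<^sub>m m - S3 * Pd) *\<^sub>v (A *\<^sub>v x)"
    by (rule assoc_mult_mat_vec[OF I A x(1)])
  also have "\<dots> = A *\<^sub>v x - (S3 * Pd) *\<^sub>v (A *\<^sub>v x)"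
    using carrier Ax by (simp add: minus_mult_distrib_mat_vec[of _ m m])
  finally have "A *\<^sub>v x - (S3 * Pd) *\<^sub>v (A *\<^sub>v x) = 0\<^sub>v m" using x(2) by simp
  then have "(S3 * Pd) *\<^sub>v (A *\<^sub>v x) = A *\<^sub>v x"
    using minus_vec_eq_zero_iff[OF Ax mult_mat_vec_carrier[OF carrier(11) Ax]] by simp
  then have "A *\<^sub>v x = 0\<^sub>v m" using real_spectrum_fixed_vector_zero[OF one_notin_spectrum carrier(11) Ax] by simp
  then show "x \<in> null_mat P3" using splitting(8) A x unfolding null_mat_def by auto
qed

lemma Ahd_A_hat_Q: "Ahd * A_hat * Q = Q"
  by (rule mp_inverse_absorb[OF A_hat_mp_inverse carrier(10) splitting(9) carrier(4) null_A_hat])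

lemma Q_A_hat: "Q * A_hat = Q * P3 - (B + C)"
  unfolding A_hat_eq Q_G_eq[symmetric] using carrier carrier_G_B_C
  by (intro mult_minus_distrib_mat[of _ n m]) auto

lemma Q_R_hat: "Q * (R3 - S3 * Pd * R) = B"
proof -
  have "Q * (R3 - S3 * Pd * R) = Q * R3 - Q * (S3 * Pd * R)"
    using carrier by (intro mult_minus_distrib_mat[of _ n m]) auto
  then show ?thesis using carrier by (simp only: Q_S3_Pd_assoc)
qed

lemma subinvariant_vector_zero:
  assumes x: "x \<in> carrier_vec n" "0\<^sub>v n \<le> x" and sub: "x \<le> B *\<^sub>v x + C *\<^sub>v x"
  shows "x = 0\<^sub>v n"
proof -
  have Gx: "G *\<^sub>v x \<in> carrier_vec m" by (rule mult_mat_vec_carrier[OF carrier_G_B_C(1) x(1)])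
  define y where "y = Q *\<^sub>v (G *\<^sub>v x)"
  have y: "y \<in> carrier_vec n" unfolding y_def by (rule mult_mat_vec_carrier[OF carrier(8) Gx])
  have "y = (Q * G) *\<^sub>v x"
    unfolding y_def by (rule assoc_mult_mat_vec[OF carrier(8) carrier_G_B_C(1) x(1), symmetric])
  also have "\<dots> = B *\<^sub>v x + C *\<^sub>v x"
    unfolding Q_G_eq by (rule add_mult_distrib_mat_vec[OF carrier_G_B_C(2,3) x(1)])
  finally have "x \<le> y" using sub by simp
  have "A_hat *\<^sub>v y = P3 *\<^sub>v y - G *\<^sub>v y"
    unfolding A_hat_eq by (rule minus_mult_distrib_mat_vec[OF carrier(4) carrier_G_B_C(1) y])
  also have "P3 *\<^sub>v y = G *\<^sub>v x"
    unfolding y_def assoc_mult_mat3_vec[OF carrier(4,8) carrier_G_B_C(1) x(1), symmetric] P3_Q_G ..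
  finally have A_hat_y: "A_hat *\<^sub>v y = G *\<^sub>v x - G *\<^sub>v y" .
  have "G *\<^sub>v x \<le> G *\<^sub>v y"
    by (rule mult_mat_vec_mono[OF carrier_G_B_C(1) nonneg_G_B_C(1) y \<open>x \<le> y\<close>])
  then have "A_hat *\<^sub>v y \<le> 0\<^sub>v m"
    unfolding A_hat_y by (rule minus_vec_nonpos[OF _ mult_mat_vec_carrier[OF carrier_G_B_C(1) y]])
  have "y = (Ahd * A_hat * Q) *\<^sub>v (G *\<^sub>v x)" unfolding Ahd_A_hat_Q y_def ..
  also have "\<dots> = Ahd *\<^sub>v (A_hat *\<^sub>v y)"
    unfolding y_def by (rule assoc_mult_mat3_vec[OF carrier(9,10,8) Gx])
  also have "\<dots> \<le> 0\<^sub>v n"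
    by (rule mult_mat_vec_nonpos[OF carrier(9) A_hat_mp_inverse_nonneg \<open>A_hat *\<^sub>v y \<le> 0\<^sub>v m\<close>])
  finally have "x \<le> 0\<^sub>v n" using \<open>x \<le> y\<close> by (rule order.trans[rotated])
  then show "x = 0\<^sub>v n" using x(2) by (rule order.antisym)
qed

lemma spectral_radius_W_less_1:
  assumes n: "n > 0"
  shows "real_spectral_radius (W_mat n B C) < 1"
proof (rule ccontr)
  let ?r = "real_spectral_radius (W_mat n B C)"
  assume "\<not> ?r < 1"
  then have r: "1 \<le> ?r" by simp
  then have pos: "0 < ?r" by simp
  obtain x where x: "x \<in> carrier_vec n" "0\<^sub>v n \<le> x" "x \<noteq> 0\<^sub>v n"
    and sub: "?r\<^sup>2 \<cdot>\<^sub>v x \<le> ?r \<cdot>\<^sub>v (B *\<^sub>v x) + C *\<^sub>v x"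
    by (rule W_mat_perron_vector[OF carrier_G_B_C(2) nonneg_G_B_C(2) carrier_G_B_C(3) nonneg_G_B_C(3)
          n pos])
  have Cx: "0\<^sub>v n \<le> C *\<^sub>v x" by (rule mult_mat_vec_nonneg[OF carrier_G_B_C(3) nonneg_G_B_C(3) x(2)])
  have arith: "X \<le> b + c"
    if "1 \<le> r" "0 \<le> X" "0 \<le> c" "r\<^sup>2 * X \<le> r * b + c" for r X b c :: real
  proof -
    have "r * (r * X) \<le> r * b + c" using that(4) by (simp add: power2_eq_square mult.assoc)
    also have "\<dots> \<le> r * (b + c)" using mult_right_mono[OF that(1,3)] by (simp add: distrib_left)
    finally have "r * X \<le> b + c" using that(1) by simp
    moreover have "X \<le> r * X" using mult_right_mono[OF that(1,2)] by simp
    ultimately show ?thesis by simp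
  qed
  have "x $ i \<le> (B *\<^sub>v x) $ i + (C *\<^sub>v x) $ i" if i: "i < n" for i
  proof (rule arith[OF r])
    show "0 \<le> x $ i" using less_eq_vecD[OF x(2)] i x(1) by simp
    show "0 \<le> (C *\<^sub>v x) $ i" using less_eq_vecD[OF Cx] i carrier(8) carrier_G_B_C(3) by simp
    show "?r\<^sup>2 * x $ i \<le> ?r * (B *\<^sub>v x) $ i + (C *\<^sub>v x) $ i"
      using less_eq_vecD[OF sub, of i] i x(1) carrier(8) carrier_G_B_C(2,3) by simp
  qed
  then have "x \<le> B *\<^sub>v x + C *\<^sub>v x"
    using x(1) carrier(8) carrier_G_B_C(2,3) unfolding less_eq_vec_def by simp
  then have "x = 0\<^sub>v n" by (rule subinvariant_vector_zero[OF x(1,2)])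
  then show False using x(3) by simp
qed

end

theorem theorem3p11:
  fixes m n :: nat
    and A Ad P1 R1 S1 P1d P2 R2 S2 P2d P3 R3 S3 P3d Ah1d Ah2d :: "real mat"
  assumes dims: "A \<in> carrier_mat m n" "m > 0" "n > 0"
    and semimono: "is_mp_inverse A Ad" "nonneg_mat Ad"
    and spl1: "double_proper_weak_regular A P1 R1 S1 P1d"
    and spl2: "double_proper_weak_regular A P2 R2 S2 P2d"
    and spl3: "double_proper_regular A P3 R3 S3 P3d"
    and nullS3: "null_mat P3 \<subseteq> null_mat S3"
    and rangeS3: "range_mat S3 \<subseteq> range_mat P3"
    and spec1: "1 \<notin> real_spectrum (S3 * P1d)"
    and spec2: "1 \<notin> real_spectrum (S3 * P2d)"
    and Ah1: "is_mp_inverse ((1\<^sub>m m - S3 * P1d) * A) Ah1d" "nonneg_mat Ah1d"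
    and Ah2: "is_mp_inverse ((1\<^sub>m m - S3 * P2d) * A) Ah2d" "nonneg_mat Ah2d"
    and cmpA: "mat_le (P3d * ((1\<^sub>m m - S3 * P2d) * A)) (P3d * ((1\<^sub>m m - S3 * P1d) * A))"
    and cmpR: "mat_le (P3d * (R3 - S3 * P2d * R2)) (P3d * (R3 - S3 * P1d * R1))"
  shows "real_spectral_radius (W_mat n (P3d * R3 - P3d * S3 * P1d * R1) (P3d * S3 * P1d * S1))
           \<le> real_spectral_radius (W_mat n (P3d * R3 - P3d * S3 * P2d * R2) (P3d * S3 * P2d * S2))
       \<and> real_spectral_radius (W_mat n (P3d * R3 - P3d * S3 * P2d * R2) (P3d * S3 * P2d * S2)) < 1"
proof -
  interpret s1: induced_splitting m n A P1 R1 S1 P1d P3 R3 S3 P3d Ah1d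
    using dims spl1 spl3 nullS3 rangeS3 spec1 Ah1 by unfold_locales
  interpret s2: induced_splitting m n A P2 R2 S2 P2d P3 R3 S3 P3d Ah2d
    using dims spl2 spl3 nullS3 rangeS3 spec2 Ah2 by unfold_locales
  have "mat_le s2.B s1.B" using cmpR unfolding s1.Q_R_hat s2.Q_R_hat .
  moreover have "mat_le (s1.B + s1.C) (s2.B + s2.C)"
    using cmpA unfolding s1.Q_A_hat s2.Q_A_hat
    by (rule mat_le_diff_cancel[OF _ mult_carrier_mat[OF s1.carrier(8,4)]
          add_carrier_mat[OF s1.carrier_G_B_C(3)] add_carrier_mat[OF s2.carrier_G_B_C(3)]])
  ultimately have "real_spectral_radius (W_mat n s1.B s1.C) \<le> real_spectral_radius (W_mat n s2.B s2.C)"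
    by (rule W_mat_spectral_radius_mono[OF s1.carrier_G_B_C(2) s1.nonneg_G_B_C(2)
          s1.carrier_G_B_C(3) s1.nonneg_G_B_C(3) s2.carrier_G_B_C(2) s2.nonneg_G_B_C(2)
          s2.carrier_G_B_C(3) s2.nonneg_G_B_C(3) dims(3)
          less_imp_le[OF s1.spectral_radius_W_less_1[OF dims(3)]]])
  then show ?thesis using s2.spectral_radius_W_less_1[OF dims(3)] by simp
qed

end
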